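(* Let $(X_1,M_1),\dots,(X_n,M_n)$ be i.i.d. copies of $(X,M)\sim\mathbb{P}_{X,M}$, $X\in\mathbb{R}^d$, $M\in\{0,1\}^d$, let $\{P_\theta:\theta\in\Theta\}$, $\Theta\subset\mathbb{R}^p$, be a model, and let $\theta_\infty^{\mathrm{MMD}}\in\arg\min_{\theta\in\Theta}\mathbb{E}_{M\sim\mathbb{P}_M}[\mathbb{D}^2(P_\theta^{(M)},\mathbb{P}_{X\mid M}^{(M)})]$. Define $\ell$, $\widehat L_n$, $L$ by $\ell(x,m;\theta)=\langle\Phi(P_\theta^{(m)}),\Phi(P_\theta^{(m)})\rangle_{\mathcal{H}}-2\langle\Phi(P_\theta^{(m)}),\Phi(x^{(m)})\rangle_{\mathcal{H}}$ for $m\neq(1,\dots,1)$, $\ell(x,(1,\dots,1);\theta)=0$, $\widehat L_n(\theta)=\frac1n\sum_{i=1}^n\ell(X_i,M_i;\theta)$, $L(\theta)=\mathbb{E}[\ell(X,M;\theta)]$. Assume: (a) there is an open neighborhood $O\subset\Theta$ of $\theta_\infty^{\mathrm{MMD}}$ such that for each $m$ in the support of $\mathbb{P}_M$ the map $\theta\mapsto\Phi(P_\theta^{(m)})$ is twice continuously Fréchet differentiable on $O$, with differentiation interchangeable with the integrals involved; (b) there is a compact $K\subset O$ whose interior contains $\theta_\infty^{\mathrm{MMD}}$ such that $\sup_{\theta\in K}\|\partial^2\Phi(P_\theta^{(m)})/\partial\theta_j\partial\theta_k\|_{\mathcal{H}}<\infty$ for every pair $(j,k)$ and every $m$ in the support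 of $\mathbb{P}_M$. Then the Hessians of $\widehat L_n$ and $L$ exist on $K$ and for every pair $(j,k)$, $$\sup_{\theta\in K}\Big|\frac{\partial^2\widehat L_n(\theta)}{\partial\theta_k\partial\theta_j}-\frac{\partial^2L(\theta)}{\partial\theta_k\partial\theta_j}\Big|\to0\quad\mathbb{P}_{X,M}\text{-almost surely as }n\to\infty.$$
   Context: $M_j=0$ means $X_j$ observed, $M_j=1$ missing; $\mathbb{P}_M$ is the law of $M$ and $\mathbb{P}_{X\mid M=m}$ the conditional law of $X$ given $M=m$. For $m\in\{0,1\}^d$, $x^{(m)}$ is the subvector of observed coordinates $\{j:m_j=0\}$ and $Q^{(m)}$ the law of $Y^{(m)}$, $Y\sim Q$. In every expectation over $M$ the empty pattern $(1,\dots,1)$ is excluded. $k$ is a positive definite kernel bounded by $1$, characteristic and dimension-independent (e.g. Gaussian kernel), with RKHS $\mathcal{H}$, mean embedding $\Phi(Q)=\mathbb{E}_{Y\sim Q}[k(Y,\cdot)]$, $\Phi(x)=k(x,\cdot)$, and MMD $\mathbb{D}(Q_1,Q_2)=\|\Phi(Q_1)-\Phi(Q_2)\|_{\mathcal{H}}$. *)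

theory Defs
  imports "HOL-Probability.Probability"
begin

text \<open>Missingness patterns: m :: 'd \<Rightarrow> bool, m j = True means coordinate j is
  MISSING (M_j = 1), m j = False means observed (M_j = 0).\<close>

definition all_missing :: "'d \<Rightarrow> bool" where
  "all_missing = (\<lambda>_. True)"

definition obs_space :: "((real^'d) \<times> ('d \<Rightarrow> bool)) measure" where
  "obs_space = borel \<Otimes>\<^sub>M count_space UNIV"

text \<open>Mean embedding Phi(Q^(m)) of the law of Y^(m), Y ~ Q, given the feature maps
  phi m (phi m y = Phi(y^(m)), which depends only on the observed coordinates of y).\<close>
definition emb :: "(('d \<Rightarrow> bool) \<Rightarrow> real^'d \<Rightarrow> 'h::{real_inner,banach,second_countable_topology})
    \<Rightarrow> (real^'d) measure \<Rightarrow> ('d \<Rightarrow> bool) \<Rightarrow> 'h" where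
  "emb phi Q m = (\<integral>y. phi m y \<partial>Q)"

definition law_M :: "((real^'d) \<times> ('d \<Rightarrow> bool)) measure \<Rightarrow> ('d \<Rightarrow> bool) measure" where
  "law_M nu = distr nu (count_space UNIV) snd"

definition cond_law :: "((real^'d) \<times> ('d \<Rightarrow> bool)) measure \<Rightarrow> ('d \<Rightarrow> bool) \<Rightarrow> (real^'d) measure" where
  "cond_law nu m = distr (uniform_measure nu {z \<in> space nu. snd z = m}) borel fst"

definition mmd_obj :: "(('d \<Rightarrow> bool) \<Rightarrow> real^'d \<Rightarrow> 'h::{real_inner,banach,second_countable_topology})
    \<Rightarrow> ('p \<Rightarrow> (real^'d) measure) \<Rightarrow> ((real^'d) \<times> ('d \<Rightarrow> bool)) measure \<Rightarrow> 'p \<Rightarrow> real" where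
  "mmd_obj phi P nu \<theta> = (\<integral>m. (if m = all_missing then 0
       else (norm (emb phi (P \<theta>) m - emb phi (cond_law nu m) m))\<^sup>2) \<partial>law_M nu)"

definition ell :: "(('d \<Rightarrow> bool) \<Rightarrow> real^'d \<Rightarrow> 'h::{real_inner,banach,second_countable_topology})
    \<Rightarrow> ('p \<Rightarrow> (real^'d) measure) \<Rightarrow> (real^'d) \<times> ('d \<Rightarrow> bool) \<Rightarrow> 'p \<Rightarrow> real" where
  "ell phi P z \<theta> = (if snd z = all_missing then 0
     else inner (emb phi (P \<theta>) (snd z)) (emb phi (P \<theta>) (snd z))
          - 2 * inner (emb phi (P \<theta>) (snd z)) (phi (snd z) (fst z)))"

definition C2_on :: "(real^'p) set \<Rightarrow> ((real^'p) \<Rightarrow> 'h::real_normed_vector)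
    \<Rightarrow> ((real^'p) \<Rightarrow> ((real^'p) \<Rightarrow>\<^sub>L 'h)) \<Rightarrow> ((real^'p) \<Rightarrow> ((real^'p) \<Rightarrow>\<^sub>L (real^'p) \<Rightarrow>\<^sub>L 'h)) \<Rightarrow> bool" where
  "C2_on U f D1 D2 \<longleftrightarrow>
     (\<forall>\<theta>\<in>U. (f has_derivative blinfun_apply (D1 \<theta>)) (at \<theta>)
            \<and> (D1 has_derivative blinfun_apply (D2 \<theta>)) (at \<theta>))
     \<and> continuous_on U D2"

definition has_hessian_at :: "((real^'p) \<Rightarrow> real) \<Rightarrow> ((real^'p) \<Rightarrow>\<^sub>L (real^'p) \<Rightarrow>\<^sub>L real) \<Rightarrow> (real^'p) \<Rightarrow> bool" where
  "has_hessian_at g H \<theta> \<longleftrightarrow>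
     (\<exists>g'. (\<forall>\<^sub>F \<theta>' in nhds \<theta>. (g has_derivative blinfun_apply (g' \<theta>')) (at \<theta>'))
           \<and> (g' has_derivative blinfun_apply H) (at \<theta>))"

definition hessian :: "((real^'p) \<Rightarrow> real) \<Rightarrow> (real^'p) \<Rightarrow> ((real^'p) \<Rightarrow>\<^sub>L (real^'p) \<Rightarrow>\<^sub>L real)" where
  "hessian g \<theta> = (THE H. has_hessian_at g H \<theta>)"

text \<open>Second partial derivative d^2 g / (d theta_k d theta_j) = d/d theta_k (d g / d theta_j).\<close>
definition second_partial :: "((real^'p) \<Rightarrow> real) \<Rightarrow> 'p \<Rightarrow> 'p \<Rightarrow> (real^'p) \<Rightarrow> real" where
  "second_partial g k j \<theta> = blinfun_apply (blinfun_apply (hessian g \<theta>) (axis k 1)) (axis j 1)"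

end

theory Submission
  imports Defs
begin

text \<open>For each observed pattern m the loss is the quadratic form
  a_m |e_m \<theta>|^2 - 2 \<langle>e_m \<theta>, v_m\<rangle> in the mean embedding e_m \<theta> of the law of the observed
  coordinates under P \<theta>, where a_m is the frequency of the pattern and v_m the mean of
  1{M = m} \<Phi>(X^(m)): empirical for the sample loss, exact for the population loss. Patterns of
  probability zero are almost surely never observed, so both losses are the same finite sum and
  their second partial derivatives are affine in (a, v) with coefficients continuous in \<theta>.
  By the strong law of large numbers (Hoeffding plus Borel--Cantelli) the empirical frequencies
  converge almost surely, and the empirical means converge weakly, tested on a countable dense
  set. Since these means are bounded, the weak convergence is uniform over the compact set of
  values of the second derivatives of e_m on K, hence the Hessians converge uniformly on K.\<close>

section \<open>Second derivatives\<close>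

definition has_derivatives2_on ::
    "'a set \<Rightarrow> ('a::real_normed_vector \<Rightarrow> 'b::real_normed_vector)
      \<Rightarrow> ('a \<Rightarrow> 'a \<Rightarrow>\<^sub>L 'b) \<Rightarrow> ('a \<Rightarrow> 'a \<Rightarrow> 'a \<Rightarrow>\<^sub>L 'b) \<Rightarrow> bool" where
  "has_derivatives2_on U f f' f'' \<longleftrightarrow>
     (\<forall>x\<in>U. (f has_derivative blinfun_apply (f' x)) (at x) \<and> (f' has_derivative f'' x) (at x))"

lemma C2_on_imp_has_derivatives2_on:
  "C2_on U f D1 D2 \<Longrightarrow> has_derivatives2_on U f D1 (\<lambda>x. blinfun_apply (D2 x))"
  by (simp add: C2_on_def has_derivatives2_on_def)

lemma has_derivatives2_on_const: "has_derivatives2_on U (\<lambda>_. c) (\<lambda>_. 0) (\<lambda>_ _. 0)"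
  by (simp add: has_derivatives2_on_def zero_blinfun.rep_eq)

lemma has_derivatives2_on_cmult:
  fixes g :: "'a::real_normed_vector \<Rightarrow> real"
  assumes "has_derivatives2_on U g g' g''"
  shows "has_derivatives2_on U (\<lambda>x. c * g x) (\<lambda>x. c *\<^sub>R g' x) (\<lambda>x h. c *\<^sub>R g'' x h)"
  using assms unfolding has_derivatives2_on_def
  by (auto intro!: derivative_eq_intros simp: blinfun.scaleR_left)

lemma has_derivatives2_on_diff:
  assumes "has_derivatives2_on U f f' f''" "has_derivatives2_on U g g' g''"
  shows "has_derivatives2_on U (\<lambda>x. f x - g x) (\<lambda>x. f' x - g' x) (\<lambda>x h. f'' x h - g'' x h)"
  using assms unfolding has_derivatives2_on_def
  by (auto intro!: derivative_eq_intros simp: blinfun.diff_left)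

lemma has_derivatives2_on_sum:
  assumes "\<And>i. i \<in> I \<Longrightarrow> has_derivatives2_on U (f i) (f' i) (f'' i)"
  shows "has_derivatives2_on U (\<lambda>x. \<Sum>i\<in>I. f i x) (\<lambda>x. \<Sum>i\<in>I. f' i x) (\<lambda>x h. \<Sum>i\<in>I. f'' i x h)"
  using assms unfolding has_derivatives2_on_def
  by (auto intro!: derivative_eq_intros simp: blinfun.sum_left)

lemma has_derivatives2_on_inner:
  fixes f g :: "'a::real_normed_vector \<Rightarrow> 'h::real_inner"
  assumes f: "has_derivatives2_on U f f' f''" and g: "has_derivatives2_on U g g' g''"
  shows "has_derivatives2_on U (\<lambda>x. f x \<bullet> g x)
     (\<lambda>x. (blinfun_inner_left (g x) o\<^sub>L f' x) + (blinfun_inner_right (f x) o\<^sub>L g' x))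
     (\<lambda>x h. (blinfun_inner_left (g x) o\<^sub>L f'' x h)
          + (blinfun_inner_left (blinfun_apply (g' x) h) o\<^sub>L f' x)
          + ((blinfun_inner_right (f x) o\<^sub>L g'' x h)
          + (blinfun_inner_right (blinfun_apply (f' x) h) o\<^sub>L g' x)))"
    (is "has_derivatives2_on U ?fg ?d1 ?d2")
  unfolding has_derivatives2_on_def
proof
  fix x assume "x \<in> U"
  then have f1: "(f has_derivative blinfun_apply (f' x)) (at x)" "(f' has_derivative f'' x) (at x)"
    and g1: "(g has_derivative blinfun_apply (g' x)) (at x)" "(g' has_derivative g'' x) (at x)"
    using f g by (auto simp: has_derivatives2_on_def)
  have "(?fg has_derivative blinfun_apply (?d1 x)) (at x)"
    using f1 g1 by (auto intro!: derivative_eq_intros simp: blinfun.add_left)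
  moreover have
    "((\<lambda>x. blinfun_inner_left (g x)) has_derivative (\<lambda>h. blinfun_inner_left (blinfun_apply (g' x) h))) (at x)"
    "((\<lambda>x. blinfun_inner_right (f x)) has_derivative (\<lambda>h. blinfun_inner_right (blinfun_apply (f' x) h))) (at x)"
    using bounded_linear.has_derivative[OF bounded_linear_blinfun_inner_left g1(1)]
      bounded_linear.has_derivative[OF bounded_linear_blinfun_inner_right f1(1)] by auto
  ultimately show "(?fg has_derivative blinfun_apply (?d1 x)) (at x) \<and> (?d1 has_derivative ?d2 x) (at x)"
    using f1 g1
    by (auto intro!: has_derivative_add bounded_bilinear.FDERIV[OF bounded_bilinear_blinfun_compose])
qed

lemma has_derivatives2_on_hessian:
  fixes g :: "real^'p \<Rightarrow> real"
  assumes U: "open U" and g: "has_derivatives2_on U g g' g''" and x: "x \<in> U"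
  shows "has_hessian_at g (Blinfun (g'' x)) x"
    and "second_partial g k j x = blinfun_apply (g'' x (axis k 1)) (axis j 1)"
proof -
  have g'': "(g' has_derivative g'' x) (at x)" using g x by (simp add: has_derivatives2_on_def)
  have bl: "bounded_linear (g'' x)" using has_derivative_bounded_linear[OF g''] .
  have near: "\<forall>\<^sub>F y in nhds x. (g has_derivative blinfun_apply (g' y)) (at y)"
    using eventually_nhds_in_open[OF U x] by eventually_elim (use g in \<open>simp add: has_derivatives2_on_def\<close>)
  show hess: "has_hessian_at g (Blinfun (g'' x)) x"
    unfolding has_hessian_at_def using near g'' by (auto simp: bounded_linear_Blinfun_apply[OF bl])
  have "H = Blinfun (g'' x)" if hessH: "has_hessian_at g H x" for H
  proof -
    obtain g1 where near1: "\<forall>\<^sub>F y in nhds x. (g has_derivative blinfun_apply (g1 y)) (at y)"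
      and H: "(g1 has_derivative blinfun_apply H) (at x)"
      using hessH unfolding has_hessian_at_def by blast
    have "\<forall>\<^sub>F y in nhds x. g1 y = g' y"
      using near1 near by eventually_elim (metis blinfun_apply_inject has_derivative_unique)
    then have "(g' has_derivative blinfun_apply H) (at x)"
      using H by (auto intro: has_derivative_transform_eventually
          simp: eventually_nhds_conv_at dest: eventually_nhds_x_imp_x)
    then have "blinfun_apply H = g'' x" using g'' has_derivative_unique by blast
    then show ?thesis by (metis blinfun_apply_inverse)
  qed
  then have "hessian g x = Blinfun (g'' x)"
    unfolding hessian_def using hess by blast
  then show "second_partial g k j x = blinfun_apply (g'' x (axis k 1)) (axis j 1)"
    by (simp add: second_partial_def bounded_linear_Blinfun_apply[OF bl])
qed

definition partial_deriv :: "(real^'p \<Rightarrow> (real^'p) \<Rightarrow>\<^sub>L 'b::real_normed_vector) \<Rightarrow> 'p \<Rightarrow> real^'p \<Rightarrow> 'b" where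
  "partial_deriv D1 j x = blinfun_apply (D1 x) (axis j 1)"

definition partial_deriv2 ::
    "(real^'p \<Rightarrow> (real^'p) \<Rightarrow>\<^sub>L (real^'p) \<Rightarrow>\<^sub>L 'b::real_normed_vector) \<Rightarrow> 'p \<Rightarrow> 'p \<Rightarrow> real^'p \<Rightarrow> 'b" where
  "partial_deriv2 D2 k j x = blinfun_apply (blinfun_apply (D2 x) (axis k 1)) (axis j 1)"

lemma C2_on_continuous_on:
  assumes f: "C2_on U f D1 D2" and K: "K \<subseteq> U"
  shows "continuous_on K f" and "continuous_on K (partial_deriv D1 j)"
    and "continuous_on K (partial_deriv2 D2 k j)"
proof -
  have "continuous_on K D1"
    using f K by (intro continuous_at_imp_continuous_on)
      (auto simp: C2_on_def dest!: has_derivative_continuous)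
  then show "continuous_on K (partial_deriv D1 j)"
    unfolding partial_deriv_def by (intro continuous_intros)
  have "continuous_on K D2"
    using f K continuous_on_subset unfolding C2_on_def by blast
  then show "continuous_on K (partial_deriv2 D2 k j)"
    unfolding partial_deriv2_def by (intro continuous_intros)
  show "continuous_on K f"
    using f K by (intro continuous_at_imp_continuous_on)
      (auto simp: C2_on_def dest!: has_derivative_continuous)
qed

section \<open>Uniform convergence\<close>

lemma uniform_limit_sum:
  fixes f :: "'i \<Rightarrow> 'n \<Rightarrow> 'a \<Rightarrow> 'b::real_normed_vector"
  assumes "finite I" and "\<And>i. i \<in> I \<Longrightarrow> uniform_limit S (f i) (l i) F"
  shows "uniform_limit S (\<lambda>n x. \<Sum>i\<in>I. f i n x) (\<lambda>x. \<Sum>i\<in>I. l i x) F"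
  using assms by (induction I rule: finite_induct) (auto intro: uniform_limit_add uniform_limit_const)

lemma uniform_limit_SUP_abs_diff_tendsto_0:
  fixes f :: "'n \<Rightarrow> 'a \<Rightarrow> real"
  assumes lim: "uniform_limit K f l F" and K: "K \<noteq> {}"
  shows "((\<lambda>n. SUP x\<in>K. ereal \<bar>f n x - l x\<bar>) \<longlongrightarrow> 0) F"
proof (rule order_tendstoI)
  fix c :: ereal assume "c < 0"
  moreover have "0 \<le> (SUP x\<in>K. ereal \<bar>f n x - l x\<bar>)" for n
    using K by (auto intro: SUP_upper2)
  ultimately show "\<forall>\<^sub>F n in F. c < (SUP x\<in>K. ereal \<bar>f n x - l x\<bar>)"
    by (intro always_eventually allI) (blast intro: less_le_trans)
next
  fix c :: ereal assume "0 < c"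
  then obtain r where r: "0 < ereal r" "ereal r < c" using ereal_dense2 by blast
  have "\<forall>\<^sub>F n in F. \<forall>x\<in>K. dist (f n x) (l x) < r"
    using r(1) by (intro uniform_limitD[OF lim]) simp
  then show "\<forall>\<^sub>F n in F. (SUP x\<in>K. ereal \<bar>f n x - l x\<bar>) < c"
  proof eventually_elim
    case (elim n)
    then have "(SUP x\<in>K. ereal \<bar>f n x - l x\<bar>) \<le> ereal r"
      by (auto intro!: SUP_least simp: dist_real_def)
    then show ?case using r(2) by (rule le_less_trans)
  qed
qed

lemma countable_closure_eq_UNIV_E:
  obtains D :: "'a::{metric_space,second_countable_topology} set"
  where "countable D" and "closure D = UNIV"
proof -
  obtain D :: "'a set" where "countable D" and dense: "\<And>X. open X \<Longrightarrow> X \<noteq> {} \<Longrightarrow> \<exists>d\<in>D. d \<in> X"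
    using countable_dense_setE by blast
  have "closure D = UNIV"
    using dense[OF open_ball] by (force simp: closure_approachable dist_commute)
  with \<open>countable D\<close> show thesis by (rule that)
qed

text \<open>Every point of the compact set is close to one of finitely many test vectors from D.\<close>
lemma uniform_limit_inner_compact:
  fixes x :: "nat \<Rightarrow> 'a::real_inner"
  assumes C: "compact C" and CD: "C \<subseteq> closure D" and x: "bounded (range x)"
    and weak: "\<And>d. d \<in> D \<Longrightarrow> (\<lambda>n. d \<bullet> x n) \<longlonglongrightarrow> d \<bullet> y"
  shows "uniform_limit C (\<lambda>n c. c \<bullet> x n) (\<lambda>c. c \<bullet> y) sequentially"
proof (rule uniform_limitI)
  fix \<epsilon> :: real assume \<epsilon>: "\<epsilon> > 0"
  obtain B where B: "B > 0" "\<And>n. norm (x n - y) \<le> B"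
  proof -
    obtain Bx where Bx: "\<And>n. norm (x n) \<le> Bx" using x by (auto simp: bounded_iff)
    show thesis
    proof (rule that[of "Bx + norm y + 1"])
      show "0 < Bx + norm y + 1" using Bx[of 0] norm_ge_zero[of "x 0"] norm_ge_zero[of y] by linarith
      show "norm (x n - y) \<le> Bx + norm y + 1" for n
        using norm_triangle_ineq4[of "x n" y] Bx[of n] by linarith
    qed
  qed
  define \<delta> where "\<delta> = \<epsilon> / (2 * B)"
  have \<delta>: "\<delta> > 0" using \<epsilon> B by (simp add: \<delta>_def)
  have "C \<subseteq> (\<Union>d\<in>D. ball d \<delta>)"
    using CD \<delta> by (force simp: closure_approachable)
  then obtain F where F: "F \<subseteq> D" "finite F" "C \<subseteq> (\<Union>d\<in>F. ball d \<delta>)"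
    using compactE_image[OF C, of D "\<lambda>d. ball d \<delta>"] by blast
  have "\<forall>\<^sub>F n in sequentially. \<forall>d\<in>F. dist (d \<bullet> x n) (d \<bullet> y) < \<epsilon> / 2"
    using F(1,2) \<epsilon> by (intro eventually_ball_finite ballI tendstoD weak) auto
  then show "\<forall>\<^sub>F n in sequentially. \<forall>c\<in>C. dist (c \<bullet> x n) (c \<bullet> y) < \<epsilon>"
  proof eventually_elim
    case (elim n)
    show ?case
    proof
      fix c assume "c \<in> C"
      then obtain d where d: "d \<in> F" "dist d c < \<delta>" using F(3) by auto
      have "\<bar>(c - d) \<bullet> (x n - y)\<bar> \<le> norm (c - d) * norm (x n - y)"
        by (rule Cauchy_Schwarz_ineq2)
      also have "\<dots> \<le> \<delta> * B"
        using d(2) B \<delta> by (intro mult_mono) (auto simp: dist_norm norm_minus_commute)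
      also have "\<dots> = \<epsilon> / 2" using B by (simp add: \<delta>_def)
      finally have "\<bar>(c - d) \<bullet> (x n - y)\<bar> \<le> \<epsilon> / 2" .
      moreover have "\<bar>d \<bullet> (x n - y)\<bar> < \<epsilon> / 2"
        using elim d(1) by (simp add: dist_real_def inner_diff_right)
      moreover have "c \<bullet> (x n - y) = d \<bullet> (x n - y) + (c - d) \<bullet> (x n - y)"
        by (simp add: inner_diff_left)
      ultimately have "\<bar>c \<bullet> (x n - y)\<bar> < \<epsilon>"
        using abs_triangle_ineq[of "d \<bullet> (x n - y)" "(c - d) \<bullet> (x n - y)"] by linarith
      then show "dist (c \<bullet> x n) (c \<bullet> y) < \<epsilon>"
        by (simp add: dist_real_def inner_diff_right)
    qed
  qed
qed

section \<open>The pattern-wise quadratic loss\<close>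

definition pattern_loss :: "('m \<Rightarrow> 'a \<Rightarrow> 'h::real_inner) \<Rightarrow> 'm set \<Rightarrow> ('m \<Rightarrow> real) \<Rightarrow> ('m \<Rightarrow> 'h) \<Rightarrow> 'a \<Rightarrow> real" where
  "pattern_loss e S a v x = (\<Sum>m\<in>S. a m * (e m x \<bullet> e m x) - 2 * (e m x \<bullet> v m))"

lemma pattern_loss_scaled_sum:
  "c * (\<Sum>i\<in>I. pattern_loss e S (a i) (v i) x)
     = pattern_loss e S (\<lambda>m. c * (\<Sum>i\<in>I. a i m)) (\<lambda>m. c *\<^sub>R (\<Sum>i\<in>I. v i m)) x"
  unfolding pattern_loss_def
  by (simp add: sum.swap[of _ I] sum_distrib_left sum_distrib_right sum_subtractf inner_sum_right
      algebra_simps)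

lemma integral_pattern_loss:
  assumes "finite S"
    and "\<And>m. m \<in> S \<Longrightarrow> integrable M (\<lambda>z. a z m)" and "\<And>m. m \<in> S \<Longrightarrow> integrable M (\<lambda>z. v z m)"
  shows "(\<integral>z. pattern_loss e S (a z) (v z) x \<partial>M)
           = pattern_loss e S (\<lambda>m. \<integral>z. a z m \<partial>M) (\<lambda>m. \<integral>z. v z m \<partial>M) x"
  unfolding pattern_loss_def using assms
  by (subst Bochner_Integration.integral_sum) (auto intro!: sum.cong)

lemma pattern_loss_subset:
  assumes "finite T" "S \<subseteq> T" and "\<And>m. m \<in> T - S \<Longrightarrow> a m = 0 \<and> v m = 0"
  shows "pattern_loss e T a v = pattern_loss e S a v"
  unfolding pattern_loss_def using assms by (intro ext sum.mono_neutral_right) auto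

lemma pattern_loss_hessian:
  fixes e :: "'m \<Rightarrow> real^'p \<Rightarrow> 'h::real_inner"
  assumes U: "open U" and e: "\<And>m. m \<in> S \<Longrightarrow> C2_on U (e m) (D1 m) (D2 m)" and x: "x \<in> U"
  shows "\<exists>H. has_hessian_at (pattern_loss e S a v) H x"
    and "second_partial (pattern_loss e S a v) k j x =
      (\<Sum>m\<in>S. a m * (2 * (partial_deriv2 (D2 m) k j x \<bullet> e m x
                              + partial_deriv (D1 m) j x \<bullet> partial_deriv (D1 m) k x))
              - 2 * (partial_deriv2 (D2 m) k j x \<bullet> v m))" (is "_ = ?rhs")
proof -
  have "\<exists>G1 G2. has_derivatives2_on U (pattern_loss e S a v) G1 G2
      \<and> blinfun_apply (G2 x (axis k 1)) (axis j 1) = ?rhs"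
    unfolding pattern_loss_def [abs_def]
    apply (intro exI conjI)
     apply (rule has_derivatives2_on_sum has_derivatives2_on_diff has_derivatives2_on_cmult
        has_derivatives2_on_inner has_derivatives2_on_const C2_on_imp_has_derivatives2_on e | assumption)+
    apply (simp add: partial_deriv_def partial_deriv2_def blinfun.sum_left blinfun.diff_left
        blinfun.add_left blinfun.scaleR_left zero_blinfun.rep_eq inner_commute algebra_simps)
    done
  then obtain G1 G2 where G: "has_derivatives2_on U (pattern_loss e S a v) G1 G2"
    and G2: "blinfun_apply (G2 x (axis k 1)) (axis j 1) = ?rhs"
    by blast
  show "\<exists>H. has_hessian_at (pattern_loss e S a v) H x"
    using has_derivatives2_on_hessian(1)[OF U G x] by blast
  show "second_partial (pattern_loss e S a v) k j x = ?rhs"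
    using has_derivatives2_on_hessian(2)[OF U G x] G2 by simp
qed

lemma uniform_limit_pattern_loss_second_partial:
  fixes e :: "'m \<Rightarrow> real^'p \<Rightarrow> 'h::real_inner"
  assumes U: "open U" and K: "compact K" "K \<subseteq> U" and S: "finite S"
    and e: "\<And>m. m \<in> S \<Longrightarrow> C2_on U (e m) (D1 m) (D2 m)"
    and a: "\<And>m. m \<in> S \<Longrightarrow> (\<lambda>n. a n m) \<longlonglongrightarrow> a_lim m"
    and v: "\<And>m. m \<in> S \<Longrightarrow> bounded (range (\<lambda>n. v n m))"
    and v_weak: "\<And>m d. m \<in> S \<Longrightarrow> d \<in> D \<Longrightarrow> (\<lambda>n. d \<bullet> v n m) \<longlonglongrightarrow> d \<bullet> v_lim m"
    and D: "closure D = UNIV"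
  shows "uniform_limit K (\<lambda>n. second_partial (pattern_loss e S (a n) (v n)) k j)
           (second_partial (pattern_loss e S a_lim v_lim) k j) sequentially"
proof -
  define q where "q m \<theta> = 2 * (partial_deriv2 (D2 m) k j \<theta> \<bullet> e m \<theta>
                              + partial_deriv (D1 m) j \<theta> \<bullet> partial_deriv (D1 m) k \<theta>)" for m \<theta>
  define w where "w m = partial_deriv2 (D2 m) k j" for m
  have "uniform_limit K (\<lambda>n \<theta>. \<Sum>m\<in>S. a n m * q m \<theta> - 2 * (w m \<theta> \<bullet> v n m))
      (\<lambda>\<theta>. \<Sum>m\<in>S. a_lim m * q m \<theta> - 2 * (w m \<theta> \<bullet> v_lim m)) sequentially"
  proof (intro uniform_limit_sum[OF S] uniform_limit_minus uniform_lim_mult uniform_limit_const)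
    fix m assume m: "m \<in> S"
    show "uniform_limit K (\<lambda>n \<theta>. a n m) (\<lambda>\<theta>. a_lim m) sequentially"
      using a[OF m] by (auto simp: uniform_limit_iff tendsto_iff)
    note cont = C2_on_continuous_on[OF e[OF m] K(2)]
    have "compact (q m ` K)" "compact (w m ` K)" "compact ((\<lambda>\<theta>. w m \<theta> \<bullet> v_lim m) ` K)"
      unfolding q_def w_def by (intro compact_continuous_image continuous_intros cont K(1))+
    then show "bounded (q m ` K)" "bounded ((\<lambda>\<theta>. w m \<theta> \<bullet> v_lim m) ` K)"
      by (auto intro: compact_imp_bounded)
    have "uniform_limit (w m ` K) (\<lambda>n c. c \<bullet> v n m) (\<lambda>c. c \<bullet> v_lim m) sequentially"
      using \<open>compact (w m ` K)\<close> v[OF m] v_weak[OF m] D by (intro uniform_limit_inner_compact) auto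
    then show "uniform_limit K (\<lambda>n \<theta>. w m \<theta> \<bullet> v n m) (\<lambda>\<theta>. w m \<theta> \<bullet> v_lim m) sequentially"
      by (rule uniform_limit_compose') auto
  qed (simp_all add: image_constant_conv)
  moreover have "second_partial (pattern_loss e S b u) k j \<theta> = (\<Sum>m\<in>S. b m * q m \<theta> - 2 * (w m \<theta> \<bullet> u m))"
    if "\<theta> \<in> K" for b u \<theta>
    using pattern_loss_hessian(2)[where e=e and S=S, OF U e] that K
    by (auto simp: q_def w_def)
  ultimately show ?thesis
    by (subst uniform_limit_cong') auto
qed

section \<open>Strong law of large numbers for bounded variables\<close>

text \<open>Hoeffding's tail bound decays geometrically in the sample size, so it is summable and
  Borel--Cantelli applies.\<close>
lemma (in prob_space) AE_eventually_mean_close: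
  fixes X :: "nat \<Rightarrow> 'a \<Rightarrow> real"
  assumes indep: "indep_vars (\<lambda>_. borel) X UNIV"
    and ident: "\<And>i. distr M borel (X i) = distr M borel (X 0)"
    and bdd: "\<And>i x. X i x \<in> {a..b}" and \<epsilon>: "\<epsilon> > 0"
  shows "AE x in M. \<forall>\<^sub>F n in sequentially.
           \<bar>(\<Sum>i<Suc n. X i x) / real (Suc n) - expectation (X 0)\<bar> < \<epsilon>"
proof -
  define \<mu> where "\<mu> = expectation (X 0)"
  define A where "A n = {x\<in>space M. \<bar>(\<Sum>i<Suc n. X i x) / real (Suc n) - \<mu>\<bar> \<ge> \<epsilon>}" for n
  define c where "c = 2 * \<epsilon>\<^sup>2 / (b + 1 - a)\<^sup>2"
  have meas[measurable]: "X i \<in> borel_measurable M" for i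
    using indep unfolding indep_vars_def by auto
  have ab: "a \<le> b" using bdd[of 0 undefined] by auto
  have "c > 0" using \<epsilon> ab by (simp add: c_def)
  have bound: "measure M (A n) \<le> 2 * exp (- c) ^ Suc n" for n
  proof -
    \<comment> \<open>The bound b + 1 only provides the strict inequality a < b that Hoeffding's inequality needs.\<close>
    interpret H: Hoeffding_ineq_iid M "{..<Suc n}" X "X 0" a "b + 1" \<mu>
    proof unfold_locales
      show "indep_vars (\<lambda>_. borel) X {..<Suc n}"
        by (rule indep_vars_subset[OF indep]) simp
      show "distr M borel (X i) = distr M borel (X 0)" for i
        by (rule ident)
      show "AE x in M. X 0 x \<in> {a..b + 1}"
        using bdd[of 0] by (intro AE_I2) (metis atLeastAtMost_iff le_add_same_cancel1 order.trans zero_le_one)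
    qed (simp_all only: meas finite_lessThan \<mu>_def)
    have "measure M (A n) \<le> 2 * exp (-2 * real (card {..<Suc n}) * \<epsilon>\<^sup>2 / (b + 1 - a)\<^sup>2)"
      unfolding A_def using H.Hoeffding_ineq_abs_ge'[of \<epsilon>] \<epsilon> ab by (simp add: lessThan_empty_iff)
    also have "-2 * real (card {..<Suc n}) * \<epsilon>\<^sup>2 / (b + 1 - a)\<^sup>2 = real (Suc n) * (- c)"
      using ab by (simp add: c_def divide_simps) (simp add: algebra_simps)
    finally show ?thesis by (simp only: exp_of_nat_mult)
  qed
  have "summable (\<lambda>n. 2 * exp (- c) ^ Suc n)"
    using \<open>c > 0\<close> by (intro summable_mult summable_Suc_iff[THEN iffD2] summable_geometric) auto
  then have "summable (\<lambda>n. measure M (A n))"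
    by (rule summable_comparison_test[rotated]) (use bound in \<open>auto intro!: exI[of _ 0]\<close>)
  then have "AE x in M. \<forall>\<^sub>F n in sequentially. x \<in> space M - A n"
    by (intro borel_cantelli_AE1) (simp_all add: A_def less_top[symmetric])
  then show ?thesis by (auto simp: A_def \<mu>_def not_le elim!: eventually_mono)
qed

lemma (in prob_space) strong_law_bounded:
  fixes X :: "nat \<Rightarrow> 'a \<Rightarrow> real"
  assumes indep: "indep_vars (\<lambda>_. borel) X UNIV"
    and ident: "\<And>i. distr M borel (X i) = distr M borel (X 0)"
    and bdd: "\<And>i x. X i x \<in> {a..b}"
  shows "AE x in M. (\<lambda>n. (\<Sum>i<n. X i x) / real n) \<longlonglongrightarrow> expectation (X 0)"
proof -
  have "AE x in M. \<forall>k::nat. \<forall>\<^sub>F n in sequentially.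
      \<bar>(\<Sum>i<Suc n. X i x) / real (Suc n) - expectation (X 0)\<bar> < 1 / real (Suc k)"
    unfolding AE_all_countable by (intro allI AE_eventually_mean_close[OF indep ident bdd]) simp
  then show ?thesis
  proof eventually_elim
    case (elim x)
    have "(\<lambda>n. (\<Sum>i<Suc n. X i x) / real (Suc n)) \<longlonglongrightarrow> expectation (X 0)"
    proof (rule tendstoI)
      fix \<epsilon> :: real assume "\<epsilon> > 0"
      then obtain k where k: "1 / real (Suc k) < \<epsilon>" using nat_approx_posE by blast
      show "\<forall>\<^sub>F n in sequentially. dist ((\<Sum>i<Suc n. X i x) / real (Suc n)) (expectation (X 0)) < \<epsilon>"
        using elim[rule_format, of k] by eventually_elim (use k in \<open>auto simp: dist_real_def\<close>)
    qed
    then show ?case by (rule LIMSEQ_imp_Suc)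
  qed
qed

locale iid_sample = prob_space Pr for Pr :: "'w measure" +
  fixes N :: "'a measure" and Z :: "nat \<Rightarrow> 'w \<Rightarrow> 'a"
  assumes indep: "indep_vars (\<lambda>_. N) Z UNIV"
    and ident: "\<And>i. distr Pr N (Z i) = distr Pr N (Z 0)"
begin

lemma measurable_Z [measurable]: "Z i \<in> measurable Pr N"
  using indep unfolding indep_vars_def by auto

lemma AE_all_samples:
  assumes "AE z in distr Pr N (Z 0). Q z" and [measurable]: "Measurable.pred N Q"
  shows "AE \<omega> in Pr. \<forall>i. Q (Z i \<omega>)"
  unfolding AE_all_countable
proof
  fix i
  have "AE z in distr Pr N (Z i). Q z" using assms(1) ident[of i] by (simp only:)
  then show "AE \<omega> in Pr. Q (Z i \<omega>)" by (simp add: AE_distr_iff)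
qed

lemma AE_sample_mean_tendsto:
  assumes f [measurable]: "f \<in> borel_measurable N" and bdd: "\<And>z. f z \<in> {a..b}"
  shows "AE \<omega> in Pr. (\<lambda>n. (\<Sum>i<n. f (Z i \<omega>)) / real n) \<longlonglongrightarrow> (\<integral>z. f z \<partial>distr Pr N (Z 0))"
proof -
  have "AE \<omega> in Pr. (\<lambda>n. (\<Sum>i<n. f (Z i \<omega>)) / real n) \<longlonglongrightarrow> expectation (\<lambda>\<omega>. f (Z 0 \<omega>))"
  proof (rule strong_law_bounded)
    show "indep_vars (\<lambda>_. borel) (\<lambda>i \<omega>. f (Z i \<omega>)) UNIV"
      by (rule indep_vars_compose2[OF indep]) simp
    have "distr Pr borel (\<lambda>\<omega>. f (Z i \<omega>)) = distr (distr Pr N (Z i)) borel f" for i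
      by (simp add: distr_distr comp_def)
    then show "distr Pr borel (\<lambda>\<omega>. f (Z i \<omega>)) = distr Pr borel (\<lambda>\<omega>. f (Z 0 \<omega>))" for i
      by (simp only: ident[of i])
  qed (rule bdd)
  moreover have "(\<integral>z. f z \<partial>distr Pr N (Z 0)) = expectation (\<lambda>\<omega>. f (Z 0 \<omega>))"
    by (rule integral_distr[OF measurable_Z f])
  ultimately show ?thesis by (simp only:)
qed

end

section \<open>Samples with missing values\<close>

definition obs_indicator :: "'m \<Rightarrow> 'x \<times> 'm \<Rightarrow> real" where
  "obs_indicator m z = (if snd z = m then 1 else 0)"

definition obs_feature :: "('m \<Rightarrow> 'x \<Rightarrow> 'h::real_vector) \<Rightarrow> 'm \<Rightarrow> 'x \<times> 'm \<Rightarrow> 'h" where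
  "obs_feature phi m z = (if snd z = m then phi m (fst z) else 0)"

lemma ell_eq_pattern_loss:
  "ell phi P z = pattern_loss (\<lambda>m \<theta>. emb phi (P \<theta>) m) (- {all_missing})
                   (\<lambda>m. obs_indicator m z) (\<lambda>m. obs_feature phi m z)" (is "_ = ?rhs")
proof
  fix \<theta>
  have "?rhs \<theta> = (\<Sum>m\<in>- {all_missing}. if snd z = m then ell phi P z \<theta> else 0)"
    unfolding pattern_loss_def
    by (rule sum.cong) (auto simp: obs_indicator_def obs_feature_def ell_def)
  then show "ell phi P z \<theta> = ?rhs \<theta>"
    by (simp add: ell_def)
qed

locale missing_data_sample = iid_sample Pr obs_space Z
  for Pr :: "'w measure" and Z :: "nat \<Rightarrow> 'w \<Rightarrow> (real^'d) \<times> ('d \<Rightarrow> bool)" +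
  fixes phi :: "('d \<Rightarrow> bool) \<Rightarrow> real^'d \<Rightarrow> 'h::{real_inner,banach,second_countable_topology}"
  assumes phi_measurable [measurable]: "\<And>m. phi m \<in> borel_measurable borel"
    and norm_phi_le_1: "\<And>m x. norm (phi m x) \<le> 1"
begin

abbreviation law :: "((real^'d) \<times> ('d \<Rightarrow> bool)) measure" where
  "law \<equiv> distr Pr obs_space (Z 0)"

definition pattern_prob :: "('d \<Rightarrow> bool) \<Rightarrow> real" where
  "pattern_prob m = measure law {z \<in> space obs_space. snd z = m}"

definition support :: "('d \<Rightarrow> bool) set" where
  "support = {m. m \<noteq> all_missing \<and> 0 < pattern_prob m}"

definition feature_mean :: "('d \<Rightarrow> bool) \<Rightarrow> 'h" where
  "feature_mean m = (\<integral>z. obs_feature phi m z \<partial>law)"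

definition freq :: "nat \<Rightarrow> 'w \<Rightarrow> ('d \<Rightarrow> bool) \<Rightarrow> real" where
  "freq n \<omega> m = (\<Sum>i<n. obs_indicator m (Z i \<omega>)) / real n"

definition feature_avg :: "nat \<Rightarrow> 'w \<Rightarrow> ('d \<Rightarrow> bool) \<Rightarrow> 'h" where
  "feature_avg n \<omega> m = (1 / real n) *\<^sub>R (\<Sum>i<n. obs_feature phi m (Z i \<omega>))"

interpretation law: prob_space law
  by (rule prob_space_distr) simp

lemma space_obs_space: "space obs_space = UNIV"
  by (simp add: obs_space_def space_pair_measure)

lemma measurable_snd_obs [measurable]: "snd \<in> measurable obs_space (count_space UNIV)"
  unfolding obs_space_def by simp

lemma measurable_fst_obs [measurable]: "fst \<in> measurable obs_space borel"
  unfolding obs_space_def by simp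

lemma obs_indicator_measurable [measurable]: "obs_indicator m \<in> borel_measurable obs_space"
  unfolding obs_indicator_def by measurable

lemma obs_feature_measurable [measurable]: "obs_feature phi m \<in> borel_measurable obs_space"
  unfolding obs_feature_def by measurable

lemma norm_obs_feature_le: "norm (obs_feature phi m z) \<le> obs_indicator m z"
  using norm_phi_le_1 by (simp add: obs_feature_def obs_indicator_def)

lemma obs_indicator_bounds: "obs_indicator m z \<in> {0..1}"
  by (simp add: obs_indicator_def)

lemma norm_obs_feature_le_1: "norm (obs_feature phi m z) \<le> 1"
  using norm_phi_le_1 by (simp add: obs_feature_def)

lemma integrable_obs_indicator: "integrable law (obs_indicator m)"
  by (intro law.integrable_const_bound[where B=1] AE_I2) (simp_all add: obs_indicator_def)

lemma integrable_obs_feature: "integrable law (obs_feature phi m)"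
  by (intro law.integrable_const_bound[where B=1] AE_I2) (simp_all add: norm_obs_feature_le_1)

lemma integral_obs_indicator: "(\<integral>z. obs_indicator m z \<partial>law) = pattern_prob m"
proof -
  have "obs_indicator m = indicator {z \<in> space obs_space. snd z = m}"
    by (auto simp: obs_indicator_def space_obs_space)
  moreover have "{z \<in> space obs_space. snd z = m} \<in> sets obs_space"
    by measurable
  ultimately show ?thesis by (simp add: pattern_prob_def)
qed

lemma norm_feature_mean_le: "norm (feature_mean m) \<le> pattern_prob m"
proof -
  have "norm (feature_mean m) \<le> (\<integral>z. norm (obs_feature phi m z) \<partial>law)"
    unfolding feature_mean_def by (rule integral_norm_bound)
  also have "\<dots> \<le> (\<integral>z. obs_indicator m z \<partial>law)"
    using integrable_obs_feature integrable_obs_indicator norm_obs_feature_le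
    by (intro integral_mono) auto
  finally show ?thesis by (simp add: integral_obs_indicator)
qed

lemma vanishing_outside_support:
  assumes "m \<noteq> all_missing" "m \<notin> support"
  shows "pattern_prob m = 0" and "feature_mean m = 0"
proof -
  show "pattern_prob m = 0"
    using assms measure_nonneg[of law "{z \<in> space obs_space. snd z = m}"]
    by (simp add: support_def pattern_prob_def)
  then show "feature_mean m = 0"
    using norm_feature_mean_le[of m] by simp
qed

lemma population_loss:
  "(\<lambda>\<theta>. \<integral>z. ell phi P z \<theta> \<partial>law)
     = pattern_loss (\<lambda>m \<theta>. emb phi (P \<theta>) m) support pattern_prob feature_mean"
proof
  fix \<theta>
  have "(\<integral>z. ell phi P z \<theta> \<partial>law)
      = pattern_loss (\<lambda>m \<theta>. emb phi (P \<theta>) m) (- {all_missing}) pattern_prob feature_mean \<theta>"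
    unfolding ell_eq_pattern_loss
    by (subst integral_pattern_loss)
       (simp_all add: integrable_obs_indicator integrable_obs_feature integral_obs_indicator
         feature_mean_def[abs_def])
  also have "\<dots> = pattern_loss (\<lambda>m \<theta>. emb phi (P \<theta>) m) support pattern_prob feature_mean \<theta>"
    by (subst pattern_loss_subset[where S=support]) (auto simp: support_def vanishing_outside_support)
  finally show "(\<integral>z. ell phi P z \<theta> \<partial>law)
      = pattern_loss (\<lambda>m \<theta>. emb phi (P \<theta>) m) support pattern_prob feature_mean \<theta>" .
qed

lemma AE_samples_in_support: "AE \<omega> in Pr. \<forall>i. snd (Z i \<omega>) \<in> insert all_missing support"
proof (rule AE_all_samples)
  have "AE z in law. \<forall>m \<in> - insert all_missing support. snd z \<noteq> m"
  proof (rule AE_finite_allI)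
    fix m assume "m \<in> - insert all_missing support"
    then have "pattern_prob m = 0" by (simp add: vanishing_outside_support)
    moreover have "{z \<in> space obs_space. snd z = m} \<in> sets obs_space" by measurable
    ultimately show "AE z in law. snd z \<noteq> m"
      by (intro AE_I'[where N="{z \<in> space obs_space. snd z = m}"])
         (auto simp: null_sets_def law.emeasure_eq_measure pattern_prob_def space_obs_space)
  qed simp
  then show "AE z in law. snd z \<in> insert all_missing support"
    by eventually_elim auto
qed measurable

lemma AE_empirical_loss:
  "AE \<omega> in Pr. \<forall>n. (\<lambda>\<theta>. 1 / real n * (\<Sum>i<n. ell phi P (Z i \<omega>) \<theta>))
      = pattern_loss (\<lambda>m \<theta>. emb phi (P \<theta>) m) support (freq n \<omega>) (feature_avg n \<omega>)"
  using AE_samples_in_support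
proof (eventually_elim, intro allI ext)
  fix \<omega> n \<theta> assume observed: "\<forall>i. snd (Z i \<omega>) \<in> insert all_missing support"
  have "1 / real n * (\<Sum>i<n. ell phi P (Z i \<omega>) \<theta>)
      = pattern_loss (\<lambda>m \<theta>. emb phi (P \<theta>) m) (- {all_missing}) (freq n \<omega>) (feature_avg n \<omega>) \<theta>"
    unfolding ell_eq_pattern_loss pattern_loss_scaled_sum freq_def[abs_def] feature_avg_def[abs_def]
    by simp
  also have "\<dots> = pattern_loss (\<lambda>m \<theta>. emb phi (P \<theta>) m) support (freq n \<omega>) (feature_avg n \<omega>) \<theta>"
  proof (rule pattern_loss_subset[THEN fun_cong])
    fix m assume "m \<in> - {all_missing} - support"
    then have "obs_indicator m (Z i \<omega>) = 0 \<and> obs_feature phi m (Z i \<omega>) = 0" for i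
      using observed by (auto simp: obs_indicator_def obs_feature_def)
    then show "freq n \<omega> m = 0 \<and> feature_avg n \<omega> m = 0"
      by (simp add: freq_def feature_avg_def)
  qed (auto simp: support_def)
  finally show "1 / real n * (\<Sum>i<n. ell phi P (Z i \<omega>) \<theta>)
      = pattern_loss (\<lambda>m \<theta>. emb phi (P \<theta>) m) support (freq n \<omega>) (feature_avg n \<omega>) \<theta>" .
qed

lemma AE_freq_tendsto: "AE \<omega> in Pr. \<forall>m. (\<lambda>n. freq n \<omega> m) \<longlonglongrightarrow> pattern_prob m"
  unfolding AE_all_countable freq_def
  using AE_sample_mean_tendsto[OF obs_indicator_measurable obs_indicator_bounds]
  by (simp add: integral_obs_indicator)

lemma AE_feature_avg_weak_tendsto:
  assumes "countable D"
  shows "AE \<omega> in Pr. \<forall>m. \<forall>d\<in>D. (\<lambda>n. d \<bullet> feature_avg n \<omega> m) \<longlonglongrightarrow> d \<bullet> feature_mean m"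
  unfolding AE_all_countable
proof
  fix m
  show "AE \<omega> in Pr. \<forall>d\<in>D. (\<lambda>n. d \<bullet> feature_avg n \<omega> m) \<longlonglongrightarrow> d \<bullet> feature_mean m"
  proof (rule AE_ball_countable'[OF _ assms])
    fix d
    have "d \<bullet> obs_feature phi m z \<in> {- norm d..norm d}" for z
    proof -
      have "\<bar>d \<bullet> obs_feature phi m z\<bar> \<le> norm d"
        using Cauchy_Schwarz_ineq2[of d "obs_feature phi m z"] norm_obs_feature_le_1[of m z]
          mult_left_le[of _ "norm d"] by force
      then show ?thesis by (auto simp: abs_le_iff)
    qed
    then have "AE \<omega> in Pr. (\<lambda>n. (\<Sum>i<n. d \<bullet> obs_feature phi m (Z i \<omega>)) / real n)
        \<longlonglongrightarrow> (\<integral>z. d \<bullet> obs_feature phi m z \<partial>law)"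
      by (intro AE_sample_mean_tendsto) simp_all
    then show "AE \<omega> in Pr. (\<lambda>n. d \<bullet> feature_avg n \<omega> m) \<longlonglongrightarrow> d \<bullet> feature_mean m"
      by (simp add: feature_avg_def feature_mean_def inner_sum_right integrable_obs_feature)
  qed
qed

lemma bounded_feature_avg: "bounded (range (\<lambda>n. feature_avg n \<omega> m))"
proof -
  have "norm (feature_avg n \<omega> m) \<le> 1" for n
  proof -
    have "norm (\<Sum>i<n. obs_feature phi m (Z i \<omega>)) \<le> (\<Sum>i<n. norm (obs_feature phi m (Z i \<omega>)))"
      by (rule norm_sum)
    also have "\<dots> \<le> real n"
      using sum_mono[of "{..<n}" "\<lambda>i. norm (obs_feature phi m (Z i \<omega>))" "\<lambda>_. 1"] norm_obs_feature_le_1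
      by simp
    finally show ?thesis by (simp add: feature_avg_def divide_simps)
  qed
  then show ?thesis by (auto simp: bounded_iff)
qed

end

theorem lemma2:
  fixes Pr :: "'w measure"
    and Z :: "nat \<Rightarrow> 'w \<Rightarrow> (real^'d) \<times> ('d \<Rightarrow> bool)"
    and phi :: "('d \<Rightarrow> bool) \<Rightarrow> real^'d \<Rightarrow> 'h::{real_inner,banach,second_countable_topology}"
    and P :: "(real^'p) \<Rightarrow> (real^'d) measure"
    and Theta Oset K :: "(real^'p) set"
    and theta0 :: "(real^'p)"
  assumes prob: "prob_space Pr"
    and indep: "prob_space.indep_vars Pr (\<lambda>_. obs_space) Z UNIV"
    and ident: "\<And>i. distr Pr obs_space (Z i) = distr Pr obs_space (Z 0)"
    and phi_meas: "\<And>m. phi m \<in> borel_measurable borel"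
    and phi_bdd: "\<And>m x. norm (phi m x) \<le> 1"
    and phi_obs: "\<And>m x y. (\<forall>j. \<not> m j \<longrightarrow> x $ j = y $ j) \<Longrightarrow> phi m x = phi m y"
    and model_prob: "\<And>\<theta>. \<theta> \<in> Theta \<Longrightarrow> prob_space (P \<theta>)"
    and model_sets: "\<And>\<theta>. \<theta> \<in> Theta \<Longrightarrow> sets (P \<theta>) = sets borel"
    and theta0_in: "theta0 \<in> Theta"
    and theta0_min: "\<And>\<theta>. \<theta> \<in> Theta \<Longrightarrow>
          mmd_obj phi P (distr Pr obs_space (Z 0)) theta0 \<le> mmd_obj phi P (distr Pr obs_space (Z 0)) \<theta>"
    and O: "open Oset" "Oset \<subseteq> Theta" "theta0 \<in> Oset"
    and K: "compact K" "K \<subseteq> Oset" "theta0 \<in> interior K"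
    and smooth: "\<And>m. measure (distr Pr obs_space (Z 0)) {z \<in> space obs_space. snd z = m} > 0 \<Longrightarrow>
          \<exists>D1 D2. C2_on Oset (\<lambda>\<theta>. emb phi (P \<theta>) m) D1 D2
            \<and> (\<forall>j k. bounded ((\<lambda>\<theta>. norm (blinfun_apply (blinfun_apply (D2 \<theta>) (axis k 1)) (axis j 1))) ` K))"
  shows "(\<forall>\<theta>\<in>K. \<exists>H. has_hessian_at
              (\<lambda>\<theta>. \<integral>z. ell phi P z \<theta> \<partial>(distr Pr obs_space (Z 0))) H \<theta>)
       \<and> (AE \<omega> in Pr.
           (\<forall>n\<ge>1. \<forall>\<theta>\<in>K. \<exists>H. has_hessian_at
              (\<lambda>\<theta>. (1 / real n) * (\<Sum>i<n. ell phi P (Z i \<omega>) \<theta>)) H \<theta>)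
         \<and> (\<forall>j k. (\<lambda>n. SUP \<theta>\<in>K. ereal \<bar>second_partial (\<lambda>\<theta>. (1 / real n) * (\<Sum>i<n. ell phi P (Z i \<omega>) \<theta>)) k j \<theta>
                         - second_partial (\<lambda>\<theta>. \<integral>z. ell phi P z \<theta> \<partial>(distr Pr obs_space (Z 0))) k j \<theta>\<bar>)
                 \<longlonglongrightarrow> 0))"
proof -
  interpret missing_data_sample Pr Z phi
    by (intro missing_data_sample.intro iid_sample.intro iid_sample_axioms.intro
        missing_data_sample_axioms.intro prob indep ident phi_meas phi_bdd)
  define e where "e m \<theta> = emb phi (P \<theta>) m" for m \<theta>
  obtain D :: "'h set" where "countable D" "closure D = UNIV"
    by (rule countable_closure_eq_UNIV_E)
  have "\<forall>m\<in>support. \<exists>D1 D2. C2_on Oset (e m) D1 D2"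
    using smooth unfolding support_def pattern_prob_def e_def[abs_def] by blast
  then obtain D1 D2 where C2: "\<And>m. m \<in> support \<Longrightarrow> C2_on Oset (e m) (D1 m) (D2 m)"
    by metis
  have hessian_exists: "\<exists>H. has_hessian_at (pattern_loss e support a v) H \<theta>" if "\<theta> \<in> K" for a v \<theta>
    using pattern_loss_hessian(1)[where e=e and S=support, OF O(1) C2] that K(2) by blast
  have "K \<noteq> {}" using K(3) interior_subset by blast
  note population = population_loss[of P, folded e_def]
  show ?thesis
  proof (intro conjI, goal_cases population_hessian empirical)
    case population_hessian
    show ?case using hessian_exists by (simp add: population)
  next
    case empirical
    from AE_empirical_loss[of P] AE_freq_tendsto AE_feature_avg_weak_tendsto[OF \<open>countable D\<close>]
    show ?case
    proof eventually_elim
      case (elim \<omega>)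
      have "uniform_limit K (\<lambda>n. second_partial (pattern_loss e support (freq n \<omega>) (feature_avg n \<omega>)) k j)
          (second_partial (pattern_loss e support pattern_prob feature_mean) k j) sequentially" for j k
        using elim(2,3)
        by (intro uniform_limit_pattern_loss_second_partial[where e=e and S=support, OF O(1) K(1,2) _ C2 _
            bounded_feature_avg _ \<open>closure D = UNIV\<close>]) auto
      then show ?case
        unfolding elim(1)[rule_format, folded e_def] population
        using hessian_exists \<open>K \<noteq> {}\<close> by (auto intro: uniform_limit_SUP_abs_diff_tendsto_0)
    qed
  qed
qed

end
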